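(* Consider the $(1,\lambda)$-CSA-ES with cumulation ($0<c<1$), any $\lambda\ge1$, $d_\sigma>0$, applied to $f(x)=[x]_1$ on $\mathbb{R}^n$. The Markov chain $([p_t]_1)_{t\in\mathbb{N}}$ is positive Harris recurrent with an invariant probability measure $\mu_{path}$, and the function $x\mapsto x^2$ is $\mu_{path}$-integrable.
   Context: For $x\in\mathbb{R}^n$, $[x]_i$ denotes its $i$-th coordinate. The $(1,\lambda)$-CSA-ES with parameters $\lambda\ge1$, $0<c\le1$, $d_\sigma>0$, minimizing $f:\mathbb{R}^n\to\mathbb{R}$: start from $X_0\in\mathbb{R}^n$, $\sigma_0>0$, $p_0\sim\mathcal{N}(0,I_n)$; at iteration $t$ draw $\xi_{t,1},\ldots,\xi_{t,\lambda}$ i.i.d. $\sim\mathcal{N}(0,I_n)$ independent of the past, children $Y_{t,i}=X_t+\sigma_t\xi_{t,i}$; $X_{t+1}$ is the child with smallest $f$-value and $\xi^\star_t$ the corresponding $\xi_{t,i}$ (so $X_{t+1}=X_t+\sigma_t\xi^\star_t$); path $p_{t+1}=(1-c)p_t+\sqrt{c(2-c)}\,\xi^\star_t$; step-size $\sigma_{t+1}=\sigma_t\exp(\frac{c}{2d_\sigma}(\|p_{t+1}\|^2/n-1))$. On $f(x)=[x]_1$, $([p_t]_1)_t$ satisfies $[p_{t+1}]_1=(1-c)[p_t]_1+\sqrt{c(2-c)}[\xi^\star_t]_1$ with $([\xi^\star_t]_1)_t$ i.i.d., each distributed as the minimum of $\lambda$ i.i.d. standard normals, so it is a Markov chain on $\mathbb{R}$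 with transition kernel $P$. A probability measure $\pi$ is invariant if $\pi(A)=\int P(x,A)\pi(dx)$ for all Borel $A$. The chain is positive Harris recurrent if it is $\varphi$-irreducible for some nonzero measure $\varphi$ (every Borel $A$ with $\varphi(A)>0$ is reached in finitely many steps with positive probability from every starting point), admits an invariant probability measure, and for every Borel $A$ with $\varphi(A)>0$ visits $A$ infinitely often with probability one from every starting point. *)

theory Defs
  imports "HOL-Probability.Probability"
begin

definition std_normal :: "real measure" where
  "std_normal = density lborel (\<lambda>x. ennreal (std_normal_density x))"

text \<open>Law of the minimum of lam i.i.d. standard normal variables
  (the law of the first coordinate of the selected step on f(x) = [x]_1).\<close>
definition min_normal :: "nat \<Rightarrow> real measure" where
  "min_normal lam =
     distr (PiM {..<lam} (\<lambda>_. std_normal)) borel (\<lambda>v. Min (v ` {..<lam}))"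

definition noise_space :: "nat \<Rightarrow> (nat \<Rightarrow> real) measure" where
  "noise_space lam = PiM UNIV (\<lambda>_::nat. min_normal lam)"

fun path_chain :: "real \<Rightarrow> nat \<Rightarrow> real \<Rightarrow> (nat \<Rightarrow> real) \<Rightarrow> nat \<Rightarrow> real" where
  "path_chain c lam x w 0 = x"
| "path_chain c lam x w (Suc t) = (1 - c) * path_chain c lam x w t + sqrt (c * (2 - c)) * w t"

definition path_kernel :: "real \<Rightarrow> nat \<Rightarrow> real \<Rightarrow> real measure" where
  "path_kernel c lam x =
     distr (min_normal lam) borel (\<lambda>z. (1 - c) * x + sqrt (c * (2 - c)) * z)"

definition is_invariant_prob :: "real \<Rightarrow> nat \<Rightarrow> real measure \<Rightarrow> bool" where
  "is_invariant_prob c lam \<pi> \<longleftrightarrow>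
     prob_space \<pi> \<and> sets \<pi> = sets borel \<and>
     (\<forall>A \<in> sets borel. emeasure \<pi> A = (\<integral>\<^sup>+ x. emeasure (path_kernel c lam x) A \<partial>\<pi>))"

definition phi_irreducible :: "real \<Rightarrow> nat \<Rightarrow> real measure \<Rightarrow> bool" where
  "phi_irreducible c lam \<phi> \<longleftrightarrow>
     sets \<phi> = sets borel \<and> emeasure \<phi> (space \<phi>) \<noteq> 0 \<and>
     (\<forall>A \<in> sets borel. emeasure \<phi> A > 0 \<longrightarrow>
        (\<forall>x. \<exists>t\<ge>1. measure (noise_space lam)
               {w \<in> space (noise_space lam). path_chain c lam x w t \<in> A} > 0))"

definition positive_harris_recurrent :: "real \<Rightarrow> nat \<Rightarrow> bool" where
  "positive_harris_recurrent c lam \<longleftrightarrow>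
     (\<exists>\<phi>. phi_irreducible c lam \<phi> \<and>
        (\<exists>\<pi>. is_invariant_prob c lam \<pi>) \<and>
        (\<forall>A \<in> sets borel. emeasure \<phi> A > 0 \<longrightarrow>
           (\<forall>x. AE w in noise_space lam. (\<exists>\<^sub>\<infinity>t. path_chain c lam x w t \<in> A))))"

end

theory Submission
  imports Defs
begin

text \<open>On \<open>f(x) = [x]_1\<close> the first path coordinate is the AR(1) chain
  \<open>p \<mapsto> (1 - c) p + sqrt (c (2 - c)) \<xi>\<close>, with i.i.d. noise \<open>\<xi>\<close> distributed as the minimum of
  \<open>\<lambda>\<close> standard normals. From any state in a bounded interval, one step has a density on
  \<open>[0, 1]\<close> bounded below (Doeblin minorization); and since \<open>E |p_t|\<close> stays bounded while the
  influence of the initial state decays like \<open>(1 - c)^t\<close>, Markov's inequality brings the chain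
  back into a fixed interval with probability at least \<open>1/2\<close>. Combining the two, the probability
  of avoiding forever a set of positive Lebesgue measure in \<open>[0, 1]\<close> is at most
  \<open>(1 - \<epsilon>/2)\<close> times its own supremum, hence zero; this gives irreducibility and Harris
  recurrence with respect to the uniform measure on \<open>[0, 1]\<close>. The invariant law is that of the
  path started in the infinite past, \<open>\<Sum>\<^sub>k (1 - c)^k sqrt (c (2 - c)) \<xi>\<^sub>k\<close>; by
  Cauchy-Schwarz its square is bounded by a geometric series in the \<open>\<xi>\<^sub>k\<^sup>2\<close>, which is
  integrable because the minimum of normals has a finite second moment.\<close>

lemma abs_le_one_plus_square: "\<bar>x::real\<bar> \<le> 1 + x\<^sup>2"
proof -
  have "0 \<le> (\<bar>x\<bar> - 1)\<^sup>2"
    by simp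
  then show ?thesis
    by (simp add: power2_eq_square algebra_simps abs_mult_self_eq)
qed

lemma ennreal_eq_0_if_le_mult:
  fixes x :: ennreal
  assumes le: "x \<le> x * ennreal q" and "q < 1" and "x \<noteq> \<top>"
  shows "x = 0"
proof -
  obtain a where a: "x = ennreal a" "0 \<le> a"
    using \<open>x \<noteq> \<top>\<close> by (cases x) auto
  show ?thesis
  proof (cases "0 \<le> q")
    case True
    then have "a \<le> a * q"
      using le a by (simp add: ennreal_mult[symmetric] ennreal_le_iff)
    then have "a * (1 - q) \<le> 0"
      by (simp add: algebra_simps)
    then show ?thesis
      using a \<open>q < 1\<close> by (simp add: mult_le_0_iff)
  next
    case False
    then show ?thesis
      using le by (simp add: ennreal_neg)
  qed
qed

lemma (in prob_space) nn_integral_const_add_indicator: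
  assumes "S \<in> events"
  shows "(\<integral>\<^sup>+ x. a + b * indicator S x \<partial>M) = a + b * emeasure M S"
  using assms emeasure_space_1
  by (simp add: nn_integral_add[OF borel_measurable_const
        borel_measurable_times_ennreal[OF borel_measurable_const borel_measurable_indicator[OF assms]]]
      nn_integral_cmult_indicator)

lemma borel_measurable_abs_ennreal: "(\<lambda>z::real. ennreal \<bar>z\<bar>) \<in> borel_measurable borel"
  by measurable

lemma measurable_affine: "(\<lambda>a::real. u + v * a) \<in> borel_measurable borel"
  by measurable

lemma emeasure_uniform_unit_interval:
  "A \<in> sets borel \<Longrightarrow> emeasure (uniform_measure lborel {0..1}) A = emeasure lborel (A \<inter> {0..1::real})"
  by (simp add: Int_commute divide_ennreal_def)

lemma prob_space_std_normal: "prob_space std_normal"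
  unfolding std_normal_def by (rule prob_space_normal_density) simp

lemma sets_std_normal [simp, measurable_cong]: "sets std_normal = sets borel"
  unfolding std_normal_def by simp

lemma space_std_normal [simp]: "space std_normal = UNIV"
  unfolding std_normal_def by simp

lemma std_normal_density_antimono:
  assumes "\<bar>x\<bar> \<le> K"
  shows "std_normal_density K \<le> std_normal_density x"
proof -
  have "x\<^sup>2 \<le> K\<^sup>2"
    using assms by (metis abs_le_square_iff abs_of_nonneg abs_ge_zero order.trans power2_abs)
  then show ?thesis
    unfolding std_normal_density_def by (intro mult_left_mono) auto
qed

lemma emeasure_std_normal_ge:
  assumes S: "S \<in> sets borel" and "S \<subseteq> {-K..K}"
  shows "ennreal (std_normal_density K) * emeasure lborel S \<le> emeasure std_normal S"
proof -
  have "ennreal (std_normal_density K) * emeasure lborel S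
      = (\<integral>\<^sup>+ x. ennreal (std_normal_density K) * indicator S x \<partial>lborel)"
    using S by (simp add: nn_integral_cmult_indicator)
  also have "\<dots> \<le> (\<integral>\<^sup>+ x. ennreal (std_normal_density x) * indicator S x \<partial>lborel)"
    using assms(2)
    by (intro nn_integral_mono) (auto simp: indicator_def subset_iff intro!: std_normal_density_antimono)
  also have "\<dots> = emeasure std_normal S"
    unfolding std_normal_def using S by (simp add: emeasure_density)
  finally show ?thesis .
qed

lemma measure_std_normal_greaterThan_pos: "0 < measure std_normal {K<..}"
proof -
  interpret prob_space std_normal by (rule prob_space_std_normal)
  have "ennreal (std_normal_density (\<bar>K\<bar> + 1)) * emeasure lborel {K<..K+1} \<le> emeasure std_normal {K<..K+1}"
    by (rule emeasure_std_normal_ge) auto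
  also have "\<dots> \<le> emeasure std_normal {K<..}"
    by (intro emeasure_mono) auto
  finally have "0 < emeasure std_normal {K<..}"
    using normal_density_pos[of 1 0 "\<bar>K\<bar> + 1"]
    by (auto simp: ennreal_mult_less_top not_le[symmetric] order.strict_iff_order)
  then show ?thesis by (simp add: emeasure_eq_measure)
qed

lemma nn_integral_std_normal_square_finite: "(\<integral>\<^sup>+ x. ennreal (x\<^sup>2) \<partial>std_normal) < \<infinity>"
proof -
  have "(\<integral>\<^sup>+ x. ennreal (x\<^sup>2) \<partial>std_normal)
      = (\<integral>\<^sup>+ x. ennreal (norm (std_normal_density x * x\<^sup>2)) \<partial>lborel)"
    unfolding std_normal_def by (subst nn_integral_density) (auto simp: ennreal_mult' intro!: nn_integral_cong)
  also have "\<dots> < \<infinity>"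
    using integrable_std_normal_moment[of 2] by (simp add: integrable_iff_bounded)
  finally show ?thesis .
qed

section \<open>The minimum of independent standard normals\<close>

lemma measurable_Min_image [measurable]:
  "(\<lambda>v::nat \<Rightarrow> real. Min (v ` {..<lam})) \<in> borel_measurable (PiM {..<lam} (\<lambda>_. std_normal))"
proof -
  have "(\<lambda>v::nat \<Rightarrow> real. Min ((\<lambda>i. v i) ` {..<lam})) \<in> borel_measurable (PiM {..<lam} (\<lambda>_. std_normal))"
    by measurable
  then show ?thesis by simp
qed

lemma product_prob_space_std_normal: "product_prob_space (\<lambda>_::nat. std_normal)"
  by (intro product_prob_spaceI prob_space_std_normal)

lemma prob_space_min_normal: "prob_space (min_normal lam)"
proof -
  interpret product_prob_space "\<lambda>_::nat. std_normal" "{..<lam}"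
    by (rule product_prob_space_std_normal)
  show ?thesis
    unfolding min_normal_def by (rule P.prob_space_distr) simp
qed

lemma sets_min_normal [simp, measurable_cong]: "sets (min_normal lam) = sets borel"
  unfolding min_normal_def by simp

lemma space_min_normal [simp]: "space (min_normal lam) = UNIV"
  unfolding min_normal_def by simp

definition min_normal_minorant :: "nat \<Rightarrow> real \<Rightarrow> real" where
  "min_normal_minorant lam K = std_normal_density K * measure std_normal {K<..} ^ (lam - 1)"

lemma min_normal_minorant_pos: "0 < min_normal_minorant lam K"
  unfolding min_normal_minorant_def
  using measure_std_normal_greaterThan_pos[of K] normal_density_pos[of 1 0 K] by simp

text \<open>The minimum lies in \<open>B \<inter> {-K..K}\<close> as soon as the first coordinate does and all
  other coordinates exceed \<open>K\<close>.\<close>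

lemma emeasure_min_normal_ge:
  assumes lam: "1 \<le> lam" and B: "B \<in> sets borel"
  shows "ennreal (min_normal_minorant lam K) * emeasure lborel (B \<inter> {-K..K}) \<le> emeasure (min_normal lam) B"
proof -
  interpret product_prob_space "\<lambda>_::nat. std_normal" "{..<lam}"
    by (rule product_prob_space_std_normal)
  define F where "F i = (if i = 0 then B \<inter> {-K..K} else {K<..})" for i :: nat
  have sets_F: "F i \<in> sets std_normal" for i
    using B by (auto simp: F_def)
  have Min_in_B: "Min (v ` {..<lam}) \<in> B" if v: "v \<in> Pi\<^sub>E {..<lam} F" for v
  proof -
    have "v 0 \<in> F 0"
      using v lam by (auto simp: PiE_iff)
    then have v0: "v 0 \<in> B \<inter> {-K..K}"
      by (simp add: F_def)
    have "v 0 \<le> v i" if "i < lam" for i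
      using v v0 that by (cases "i = 0") (auto simp: PiE_iff F_def dest!: bspec[of _ _ i])
    then have "Min (v ` {..<lam}) = v 0"
      using lam by (intro Min_eqI) auto
    then show ?thesis using v0 by simp
  qed
  obtain m where m: "lam = Suc m" using lam by (cases lam) auto
  have "ennreal (min_normal_minorant lam K) * emeasure lborel (B \<inter> {-K..K})
     = (ennreal (std_normal_density K) * emeasure lborel (B \<inter> {-K..K})) * ennreal (measure std_normal {K<..}) ^ m"
    using m by (simp add: min_normal_minorant_def ennreal_mult' ennreal_power mult_ac)
  also have "\<dots> \<le> emeasure std_normal (B \<inter> {-K..K}) * emeasure std_normal {K<..} ^ m"
    using B by (intro mult_mono emeasure_std_normal_ge) (auto simp: M.emeasure_eq_measure)
  also have "\<dots> = (\<Prod>i<lam. emeasure std_normal (F i))"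
    unfolding m prod.lessThan_Suc_shift by (simp add: F_def)
  also have "\<dots> = emeasure (PiM {..<lam} (\<lambda>_. std_normal)) (Pi\<^sub>E {..<lam} F)"
    using sets_F by (intro emeasure_PiM[symmetric]) auto
  also have "\<dots> \<le> emeasure (PiM {..<lam} (\<lambda>_. std_normal))
      {v \<in> space (PiM {..<lam} (\<lambda>_. std_normal)). Min (v ` {..<lam}) \<in> B}"
    using Min_in_B B by (intro emeasure_mono) (auto simp: space_PiM)
  also have "\<dots> = emeasure (min_normal lam) B"
    unfolding min_normal_def using B by (subst emeasure_distr) (auto simp: vimage_def Int_def conj_commute)
  finally show ?thesis .
qed

lemma nn_integral_min_normal_square_finite:
  assumes lam: "1 \<le> lam"
  shows "(\<integral>\<^sup>+ z. ennreal (z\<^sup>2) \<partial>min_normal lam) < \<infinity>"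
proof -
  interpret product_prob_space "\<lambda>_::nat. std_normal" "{..<lam}"
    by (rule product_prob_space_std_normal)
  let ?P = "PiM {..<lam} (\<lambda>_. std_normal)"
  have component: "(\<integral>\<^sup>+ v. ennreal ((v i)\<^sup>2) \<partial>?P) = (\<integral>\<^sup>+ x. ennreal (x\<^sup>2) \<partial>std_normal)"
    if "i < lam" for i
  proof -
    have "(\<integral>\<^sup>+ x. ennreal (x\<^sup>2) \<partial>std_normal) = (\<integral>\<^sup>+ x. ennreal (x\<^sup>2) \<partial>distr ?P std_normal (\<lambda>v. v i))"
      using PiM_component[of i] that by simp
    also have "\<dots> = (\<integral>\<^sup>+ v. ennreal ((v i)\<^sup>2) \<partial>?P)"
      using that by (subst nn_integral_distr) auto
    finally show ?thesis by simp
  qed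
  have Min_square_le: "ennreal ((Min (v ` {..<lam}))\<^sup>2) \<le> (\<Sum>i<lam. ennreal ((v i)\<^sup>2))" for v :: "nat \<Rightarrow> real"
  proof -
    have "Min (v ` {..<lam}) \<in> v ` {..<lam}"
      using lam by (intro Min_in) (auto simp: lessThan_empty_iff)
    then obtain j where "j < lam" "Min (v ` {..<lam}) = v j"
      by blast
    then show ?thesis
      by (metis finite_lessThan lessThan_iff member_le_sum zero_le)
  qed
  have "(\<integral>\<^sup>+ z. ennreal (z\<^sup>2) \<partial>min_normal lam) = (\<integral>\<^sup>+ v. ennreal ((Min (v ` {..<lam}))\<^sup>2) \<partial>?P)"
    unfolding min_normal_def by (subst nn_integral_distr) auto
  also have "\<dots> \<le> (\<integral>\<^sup>+ v. (\<Sum>i<lam. ennreal ((v i)\<^sup>2)) \<partial>?P)"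
    by (intro nn_integral_mono Min_square_le)
  also have "\<dots> = (\<Sum>i<lam. \<integral>\<^sup>+ x. ennreal (x\<^sup>2) \<partial>std_normal)"
    using component by (subst nn_integral_sum) (auto intro!: sum.cong simp del: sum_constant)
  also have "\<dots> < \<infinity>"
    using nn_integral_std_normal_square_finite by (simp add: ennreal_mult_less_top of_nat_less_top)
  finally show ?thesis .
qed

lemma path_chain_add:
  "path_chain c lam y w (t + m) = path_chain c lam (path_chain c lam y w m) (\<lambda>i. w (i + m)) t"
  by (induction t) auto

lemma path_chain_cong_prefix:
  "(\<And>i. i < m \<Longrightarrow> w i = w' i) \<Longrightarrow> path_chain c lam y w m = path_chain c lam y w' m"
  by (induction m) auto

locale csa_path =
  fixes c :: real and lam :: nat
  assumes c_pos: "0 < c" and c_less_1: "c < 1" and lam_pos: "1 \<le> lam"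
begin

abbreviation "\<mu> \<equiv> min_normal lam"
abbreviation "N \<equiv> noise_space lam"
abbreviation "X \<equiv> path_chain c lam"
abbreviation "r \<equiv> 1 - c"
abbreviation "s \<equiv> sqrt (c * (2 - c))"

lemma r_pos: "0 < r" and r_less_1: "r < 1" and s_pos: "0 < s"
  using c_pos c_less_1 by auto

sublocale noise: sequence_space \<mu>
  by (intro sequence_space.intro product_prob_spaceI prob_space_min_normal)

lemma noise_space_eq: "N = PiM UNIV (\<lambda>_. \<mu>)"
  by (simp add: noise_space_def)

sublocale N: prob_space N
  unfolding noise_space_eq by (rule noise.P.prob_space_axioms)

lemma space_noise_space [simp]: "space N = UNIV"
  by (simp add: noise_space_eq space_PiM)

lemma measurable_noise_component [measurable]: "(\<lambda>w. w i) \<in> borel_measurable N"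
  unfolding noise_space_eq by measurable

lemma measurable_path_chain:
  "(\<lambda>p. X (fst p) (snd p) t) \<in> borel_measurable (borel \<Otimes>\<^sub>M N)"
  by (induction t) (simp_all, measurable)

text \<open>The measurable prover does not terminate on goals involving the path chain over the noise
  space, so such measurability facts are composed by hand below.\<close>

lemma measurable_path_chain_noise [measurable]: "(\<lambda>w. X y w t) \<in> borel_measurable N"
  using measurable_Pair2[OF measurable_path_chain, of y] by simp

lemma measurable_noise_shift [measurable]: "(\<lambda>w i. w (i + m)) \<in> measurable N N"
  unfolding noise_space_eq by (rule measurable_PiM_single') (auto simp: space_PiM)

lemma nn_integral_noise_component:
  assumes f: "f \<in> borel_measurable borel"
  shows "(\<integral>\<^sup>+ w. f (w n) \<partial>N) = (\<integral>\<^sup>+ z. f z \<partial>\<mu>)"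
proof -
  have "(\<integral>\<^sup>+ z. f z \<partial>\<mu>) = (\<integral>\<^sup>+ z. f z \<partial>distr N \<mu> (\<lambda>w. w n))"
    using noise.PiM_component[of n] by (simp add: noise_space_eq)
  also have "\<dots> = (\<integral>\<^sup>+ w. f (w n) \<partial>N)"
    using f unfolding noise_space_eq
    by (intro nn_integral_distr) (auto simp: measurable_cong_sets[OF sets_min_normal refl])
  finally show ?thesis by simp
qed

lemma nn_integral_noise_case_nat:
  assumes [measurable]: "f \<in> borel_measurable N"
  shows "(\<integral>\<^sup>+ w. f w \<partial>N) = (\<integral>\<^sup>+ a. \<integral>\<^sup>+ w. f (case_nat a w) \<partial>N \<partial>\<mu>)"
proof -
  have [measurable]: "(\<lambda>p. case_nat (fst p) (snd p)) \<in> measurable (\<mu> \<Otimes>\<^sub>M N) N"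
    unfolding noise_space_eq by measurable
  have "(\<integral>\<^sup>+ w. f w \<partial>N) = (\<integral>\<^sup>+ w. f w \<partial>distr (\<mu> \<Otimes>\<^sub>M N) N (\<lambda>p. case_nat (fst p) (snd p)))"
    using noise.PiM_iter by (simp add: noise_space_eq split_beta')
  also have "\<dots> = (\<integral>\<^sup>+ p. f (case_nat (fst p) (snd p)) \<partial>(\<mu> \<Otimes>\<^sub>M N))"
    by (subst nn_integral_distr) auto
  also have "\<dots> = (\<integral>\<^sup>+ a. \<integral>\<^sup>+ w. f (case_nat a w) \<partial>N \<partial>\<mu>)"
    by (subst N.nn_integral_fst[symmetric]) auto
  finally show ?thesis .
qed

text \<open>Markov property: the shifted noise is independent of the first \<open>m\<close> steps and distributed as
  the noise itself.\<close>

lemma nn_integral_path_chain_shift: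
  assumes [measurable]: "g \<in> borel_measurable (borel \<Otimes>\<^sub>M N)"
  shows "(\<integral>\<^sup>+ w. g (X y w m, \<lambda>i. w (i + m)) \<partial>N) = (\<integral>\<^sup>+ w. \<integral>\<^sup>+ w'. g (X y w m, w') \<partial>N \<partial>N)"
proof -
  let ?comb = "\<lambda>p. comb_seq m (fst p) (snd p)"
  have [measurable]: "?comb \<in> measurable (N \<Otimes>\<^sub>M N) N"
    unfolding noise_space_eq by (rule measurable_comb_seq'[OF measurable_fst measurable_snd])
  have comb: "X y (?comb p) m = X y (fst p) m" "(\<lambda>i. ?comb p (i + m)) = snd p" for p
    by (auto intro!: path_chain_cong_prefix simp: comb_seq_less comb_seq_add)
  have "(\<integral>\<^sup>+ w. g (X y w m, \<lambda>i. w (i + m)) \<partial>N)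
      = (\<integral>\<^sup>+ w. g (X y w m, \<lambda>i. w (i + m)) \<partial>distr (N \<Otimes>\<^sub>M N) N ?comb)"
    using noise.PiM_comb_seq[of m] by (simp add: noise_space_eq split_beta')
  also have "\<dots> = (\<integral>\<^sup>+ p. g (X y (?comb p) m, \<lambda>i. ?comb p (i + m)) \<partial>(N \<Otimes>\<^sub>M N))"
    by (rule nn_integral_distr)
      (simp_all add: measurable_cong_sets[OF sets_distr refl]
        measurable_compose[OF measurable_Pair[OF measurable_path_chain_noise measurable_noise_shift] assms])
  also have "\<dots> = (\<integral>\<^sup>+ p. g (X y (fst p) m, snd p) \<partial>(N \<Otimes>\<^sub>M N))"
    by (simp only: comb)
  also have "\<dots> = (\<integral>\<^sup>+ w. \<integral>\<^sup>+ w'. g (X y w m, w') \<partial>N \<partial>N)"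
    using N.nn_integral_fst[of "\<lambda>p. g (X y (fst p) m, snd p)" N]
    by (simp add: measurable_compose[OF measurable_Pair[OF measurable_compose[OF measurable_fst
          measurable_path_chain_noise] measurable_snd] assms])
  finally show ?thesis .
qed

section \<open>Return to a bounded interval\<close>

definition noise_abs_mean :: real where
  "noise_abs_mean = enn2real (\<integral>\<^sup>+ z. ennreal \<bar>z\<bar> \<partial>\<mu>)"

lemma nn_integral_abs_noise: "(\<integral>\<^sup>+ z. ennreal \<bar>z\<bar> \<partial>\<mu>) = ennreal noise_abs_mean"
proof -
  have "(\<integral>\<^sup>+ z. ennreal \<bar>z\<bar> \<partial>\<mu>) \<le> (\<integral>\<^sup>+ z. 1 + ennreal (z\<^sup>2) \<partial>\<mu>)"
    using ennreal_leI[OF abs_le_one_plus_square] by (intro nn_integral_mono) (simp add: ennreal_plus)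
  also have "\<dots> = 1 + (\<integral>\<^sup>+ z. ennreal (z\<^sup>2) \<partial>\<mu>)"
    using prob_space.emeasure_space_1[OF prob_space_min_normal, of lam]
    by (subst nn_integral_add) (auto simp: measurable_cong_sets[OF sets_min_normal refl])
  also have "\<dots> < \<infinity>"
    using nn_integral_min_normal_square_finite[OF lam_pos] by simp
  finally show ?thesis
    unfolding noise_abs_mean_def by (simp add: less_top)
qed

lemma noise_abs_mean_nonneg: "0 \<le> noise_abs_mean"
  unfolding noise_abs_mean_def by simp

lemma nn_integral_abs_path_chain_le:
  "(\<integral>\<^sup>+ w. ennreal \<bar>X y w n\<bar> \<partial>N) \<le> ennreal (r^n * \<bar>y\<bar> + s * noise_abs_mean / c)"
proof (induction n)
  case 0
  have "0 \<le> s * noise_abs_mean / c"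
    using noise_abs_mean_nonneg c_pos s_pos by simp
  then show ?case
    using N.emeasure_space_1 by (simp add: ennreal_plus[symmetric] del: ennreal_plus)
next
  case (Suc n)
  let ?m = noise_abs_mean
  have meas: "(\<lambda>w. ennreal \<bar>X y w n\<bar>) \<in> borel_measurable N"
    "(\<lambda>w. ennreal \<bar>w n\<bar>) \<in> borel_measurable N"
    by (rule measurable_compose[OF measurable_path_chain_noise borel_measurable_abs_ennreal],
        rule measurable_compose[OF measurable_noise_component borel_measurable_abs_ennreal])
  have "(\<integral>\<^sup>+ w. ennreal \<bar>X y w (Suc n)\<bar> \<partial>N)
      \<le> (\<integral>\<^sup>+ w. ennreal r * ennreal \<bar>X y w n\<bar> + ennreal s * ennreal \<bar>w n\<bar> \<partial>N)"
  proof (intro nn_integral_mono)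
    fix w :: "nat \<Rightarrow> real"
    have "\<bar>X y w (Suc n)\<bar> \<le> r * \<bar>X y w n\<bar> + s * \<bar>w n\<bar>"
      using r_pos s_pos by (simp add: abs_triangle_ineq[THEN order_trans] abs_mult)
    then show "ennreal \<bar>X y w (Suc n)\<bar> \<le> ennreal r * ennreal \<bar>X y w n\<bar> + ennreal s * ennreal \<bar>w n\<bar>"
      using r_pos s_pos by (simp add: ennreal_mult'[symmetric] ennreal_plus[symmetric] del: ennreal_plus)
  qed
  also have "\<dots> = ennreal r * (\<integral>\<^sup>+ w. ennreal \<bar>X y w n\<bar> \<partial>N) + ennreal s * (\<integral>\<^sup>+ w. ennreal \<bar>w n\<bar> \<partial>N)"
    by (simp only: nn_integral_add[OF borel_measurable_times_ennreal[OF borel_measurable_const meas(1)]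
          borel_measurable_times_ennreal[OF borel_measurable_const meas(2)]] nn_integral_cmult[OF meas(1)]
          nn_integral_cmult[OF meas(2)])
  also have "(\<integral>\<^sup>+ w. ennreal \<bar>w n\<bar> \<partial>N) = ennreal ?m"
    by (rule trans[OF nn_integral_noise_component[OF borel_measurable_abs_ennreal] nn_integral_abs_noise])
  also have "ennreal r * (\<integral>\<^sup>+ w. ennreal \<bar>X y w n\<bar> \<partial>N) + ennreal s * ennreal ?m
      \<le> ennreal r * ennreal (r^n * \<bar>y\<bar> + s * ?m / c) + ennreal s * ennreal ?m"
    by (intro add_mono mult_left_mono Suc.IH) auto
  also have "\<dots> = ennreal (r^Suc n * \<bar>y\<bar> + s * ?m / c)"
  proof -
    have "r * (r^n * \<bar>y\<bar> + s * ?m / c) + s * ?m = r^Suc n * \<bar>y\<bar> + s * ?m / c"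
      using c_pos by (simp add: field_simps)
    then show ?thesis
      using r_pos s_pos noise_abs_mean_nonneg c_pos
      by (simp add: ennreal_mult'[symmetric] ennreal_plus[symmetric] del: ennreal_plus)
  qed
  finally show ?case .
qed

definition return_radius :: real where
  "return_radius = 2 * (1 + s * noise_abs_mean / c)"

lemma return_radius_pos: "0 < return_radius"
  unfolding return_radius_def using s_pos c_pos noise_abs_mean_nonneg
  by (simp add: add_pos_nonneg)

text \<open>The deterministic part \<open>r^n y\<close> of \<open>X y w n\<close> dies out, so by Markov's inequality the
  chain is eventually back in \<open>[-return_radius, return_radius]\<close> with probability at least
  \<open>1/2\<close>.\<close>

lemma exists_time_escape_prob_le_half:
  "\<exists>n. emeasure N {w. return_radius < \<bar>X y w n\<bar>} \<le> ennreal (1/2)"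
proof -
  let ?R = return_radius
  have "0 < 1 / (\<bar>y\<bar> + 1)"
    by simp
  then obtain n where "r^n < 1 / (\<bar>y\<bar> + 1)"
    using real_arch_pow_inv r_less_1 by blast
  then have "r^n * (\<bar>y\<bar> + 1) \<le> 1"
    by (simp add: field_simps)
  then have decayed: "r^n * \<bar>y\<bar> \<le> 1"
    using zero_less_power[OF r_pos, of n] by (simp add: distrib_left)
  let ?u = "\<lambda>w. ennreal \<bar>X y w n\<bar>"
  have meas: "?u \<in> borel_measurable N"
    by (rule measurable_compose[OF measurable_path_chain_noise borel_measurable_abs_ennreal])
  have "{w \<in> space N. 1 \<le> ennreal (1 / ?R) * ?u w} = (\<lambda>w. ennreal (1 / ?R) * ?u w) -` {1..} \<inter> space N"
    by auto
  also have "\<dots> \<in> sets N"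
    by (rule measurable_sets[OF borel_measurable_times_ennreal[OF borel_measurable_const meas]]) simp
  finally have "emeasure N {w. ?R < \<bar>X y w n\<bar>} \<le> emeasure N {w \<in> space N. 1 \<le> ennreal (1 / ?R) * ?u w}"
    using return_radius_pos by (intro emeasure_mono) (auto simp: ennreal_mult'[symmetric] field_simps)
  also have "\<dots> \<le> ennreal (1 / ?R) * (\<integral>\<^sup>+ w. ?u w * indicator (space N) w \<partial>N)"
    using sets.top[of N] by (intro nn_integral_Markov_inequality) (simp_all add: meas)
  also have "\<dots> \<le> ennreal (1 / ?R) * ennreal (r^n * \<bar>y\<bar> + s * noise_abs_mean / c)"
    using nn_integral_abs_path_chain_le[of y n] by (intro mult_left_mono) (simp_all add: meas)
  also have "\<dots> = ennreal ((r^n * \<bar>y\<bar> + s * noise_abs_mean / c) / ?R)"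
    using return_radius_pos by (simp add: ennreal_mult'[symmetric])
  also have "\<dots> \<le> ennreal (1/2)"
  proof (intro ennreal_leI)
    have "?R / 2 = 1 + s * noise_abs_mean / c"
      by (simp add: return_radius_def)
    then have "r^n * \<bar>y\<bar> + s * noise_abs_mean / c \<le> ?R / 2"
      using decayed by linarith
    then show "(r^n * \<bar>y\<bar> + s * noise_abs_mean / c) / ?R \<le> 1/2"
      using return_radius_pos by (simp add: divide_le_eq)
  qed
  finally show ?thesis by blast
qed

section \<open>Minorization and Harris recurrence\<close>

lemma emeasure_path_chain_Suc_0:
  assumes A: "A \<in> sets borel"
  shows "emeasure N {w. X y w (Suc 0) \<in> A} = emeasure \<mu> {a. r * y + s * a \<in> A}"
proof -
  have sets: "{w. X y w (Suc 0) \<in> A} \<in> sets N" "{a. r * y + s * a \<in> A} \<in> sets \<mu>"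
    using measurable_sets[OF measurable_path_chain_noise A, of y "Suc 0"]
      measurable_sets[OF measurable_affine A, of "r * y" s]
    by (simp_all add: vimage_def)
  have "emeasure N {w. X y w (Suc 0) \<in> A} = (\<integral>\<^sup>+ w. indicator A (r * y + s * w 0) \<partial>N)"
    using sets(1) by (simp add: nn_integral_indicator[symmetric] indicator_def del: nn_integral_indicator)
  also have "\<dots> = (\<integral>\<^sup>+ a. indicator A (r * y + s * a) \<partial>\<mu>)"
    by (rule nn_integral_noise_component[OF measurable_compose[OF measurable_affine borel_measurable_indicator[OF A]]])
  also have "\<dots> = emeasure \<mu> {a. r * y + s * a \<in> A}"
    using sets(2) by (simp add: nn_integral_indicator[symmetric] indicator_def del: nn_integral_indicator)
  finally show ?thesis .
qed

text \<open>Doeblin-type minorization: from any state in \<open>[-R, R]\<close> one step of the chain has a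
  density on \<open>[0, 1]\<close> bounded below by a positive constant depending only on \<open>R\<close>.\<close>

lemma emeasure_noise_affine_ge:
  assumes A: "A \<in> sets borel" and y: "\<bar>y\<bar> \<le> R"
  shows "ennreal (min_normal_minorant lam ((1 + R) / s)) * emeasure lborel (A \<inter> {0..1})
    \<le> ennreal s * emeasure \<mu> {a. r * y + s * a \<in> A}"
proof -
  define K where "K = (1 + R) / s"
  define B where "B = {a. r * y + s * a \<in> A}"
  define T where "T = {a. r * y + s * a \<in> A \<inter> {0..1}}"
  have sets_B: "B \<in> sets borel"
    using measurable_sets[OF measurable_affine A, of "r * y" s] by (simp add: B_def vimage_def)
  have "\<bar>r * y\<bar> \<le> \<bar>y\<bar>"
    using r_pos r_less_1 by (simp add: abs_mult mult_left_le_one_le)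
  then have "\<bar>r * y\<bar> \<le> R"
    using y by linarith
  then have "T \<subseteq> B \<inter> {-K..K}"
    using s_pos by (auto simp: T_def B_def K_def field_simps abs_le_iff)
  have "lborel = density (distr lborel borel (\<lambda>x. r * y + s * x)) (\<lambda>_. ennreal \<bar>s\<bar>)"
    using c_pos c_less_1 by (intro lborel_real_affine) simp
  then have "emeasure lborel (A \<inter> {0..1})
      = emeasure (density (distr lborel borel (\<lambda>x. r * y + s * x)) (\<lambda>_. ennreal \<bar>s\<bar>)) (A \<inter> {0..1})"
    by (rule arg_cong)
  also have "\<dots> = ennreal s * emeasure lborel T"
    using A s_pos by (simp add: emeasure_density_const emeasure_distr T_def vimage_def)
  finally have "ennreal (min_normal_minorant lam K) * emeasure lborel (A \<inter> {0..1})
      = ennreal s * (ennreal (min_normal_minorant lam K) * emeasure lborel T)"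
    by (simp add: mult_ac)
  also have "\<dots> \<le> ennreal s * (ennreal (min_normal_minorant lam K) * emeasure lborel (B \<inter> {-K..K}))"
    using \<open>T \<subseteq> B \<inter> {-K..K}\<close> sets_B by (intro mult_left_mono emeasure_mono) auto
  also have "\<dots> \<le> ennreal s * emeasure \<mu> B"
    by (intro mult_left_mono emeasure_min_normal_ge[OF lam_pos sets_B]) simp
  finally show ?thesis
    unfolding K_def B_def .
qed

definition hit_bound :: "real set \<Rightarrow> real \<Rightarrow> real" where
  "hit_bound A R = min_normal_minorant lam ((1 + R) / s) * measure lborel (A \<inter> {0..1}) / s"

lemma emeasure_lborel_Int_unit_interval:
  assumes "A \<in> sets borel"
  shows "emeasure lborel (A \<inter> {0..1}) = ennreal (measure lborel (A \<inter> {0..1::real}))"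
proof (rule emeasure_eq_ennreal_measure)
  have "emeasure lborel (A \<inter> {0..1}) \<le> emeasure lborel {0..1::real}"
    using assms by (intro emeasure_mono) auto
  then show "emeasure lborel (A \<inter> {0..1}) \<noteq> \<top>"
    by (auto simp: top_unique)
qed

lemma hit_bound_pos:
  assumes "A \<in> sets borel" and "0 < emeasure lborel (A \<inter> {0..1})"
  shows "0 < hit_bound A R"
  using assms min_normal_minorant_pos s_pos
  by (simp add: hit_bound_def emeasure_lborel_Int_unit_interval)

lemma hit_bound_le_prob:
  assumes A: "A \<in> sets borel" and y: "\<bar>y\<bar> \<le> R"
  shows "hit_bound A R \<le> measure N {w. X y w (Suc 0) \<in> A}"
proof -
  let ?\<kappa> = "min_normal_minorant lam ((1 + R) / s)"
  have "ennreal (?\<kappa> * measure lborel (A \<inter> {0..1})) = ennreal ?\<kappa> * emeasure lborel (A \<inter> {0..1})"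
    using less_imp_le[OF min_normal_minorant_pos]
    by (simp add: emeasure_lborel_Int_unit_interval[OF A] ennreal_mult)
  also have "\<dots> \<le> ennreal s * emeasure \<mu> {a. r * y + s * a \<in> A}"
    by (rule emeasure_noise_affine_ge[OF A y])
  also have "\<dots> = ennreal (s * measure N {w. X y w (Suc 0) \<in> A})"
    using s_pos by (simp only: emeasure_path_chain_Suc_0[OF A, symmetric] N.emeasure_eq_measure)
      (simp add: ennreal_mult)
  finally show ?thesis
    unfolding hit_bound_def using s_pos by (simp add: ennreal_le_iff field_simps)
qed

definition never_hits :: "real set \<Rightarrow> (real \<times> (nat \<Rightarrow> real)) set" where
  "never_hits A = {(y, w). \<forall>t. X y w (Suc t) \<notin> A}"

definition prob_never_hits :: "real set \<Rightarrow> real \<Rightarrow> ennreal" where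
  "prob_never_hits A y = (\<integral>\<^sup>+ w. indicator (never_hits A) (y, w) \<partial>N)"

lemma mem_never_hits: "(y, w) \<in> never_hits A \<longleftrightarrow> (\<forall>t. X y w (Suc t) \<notin> A)"
  by (simp add: never_hits_def del: path_chain.simps)

lemma never_hits_shift:
  assumes "(y, w) \<in> never_hits A"
  shows "(X y w n, \<lambda>i. w (i + n)) \<in> never_hits A"
  using assms unfolding mem_never_hits by (metis path_chain_add add_Suc)

lemma sets_never_hits:
  assumes A: "A \<in> sets borel"
  shows "never_hits A \<in> sets (borel \<Otimes>\<^sub>M N)"
proof -
  have "{p \<in> space (borel \<Otimes>\<^sub>M N). \<forall>t. X (fst p) (snd p) (Suc t) \<notin> A} \<in> sets (borel \<Otimes>\<^sub>M N)"
  proof (rule sets.sets_Collect_countable_All)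
    fix t
    have "space (borel \<Otimes>\<^sub>M N) - (\<lambda>p. X (fst p) (snd p) (Suc t)) -` A \<inter> space (borel \<Otimes>\<^sub>M N) \<in> sets (borel \<Otimes>\<^sub>M N)"
      by (rule sets.compl_sets[OF measurable_sets[OF measurable_path_chain A]])
    moreover have "space (borel \<Otimes>\<^sub>M N) - (\<lambda>p. X (fst p) (snd p) (Suc t)) -` A \<inter> space (borel \<Otimes>\<^sub>M N)
        = {p \<in> space (borel \<Otimes>\<^sub>M N). X (fst p) (snd p) (Suc t) \<notin> A}"
      by blast
    ultimately show "{p \<in> space (borel \<Otimes>\<^sub>M N). X (fst p) (snd p) (Suc t) \<notin> A} \<in> sets (borel \<Otimes>\<^sub>M N)"
      by (simp only:)
  qed
  moreover have "never_hits A = {p \<in> space (borel \<Otimes>\<^sub>M N). \<forall>t. X (fst p) (snd p) (Suc t) \<notin> A}"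
    by (auto simp: never_hits_def space_pair_measure simp del: path_chain.simps)
  ultimately show ?thesis
    by (simp only:)
qed

lemma prob_never_hits_le_1: "prob_never_hits A y \<le> 1"
proof -
  have "prob_never_hits A y \<le> (\<integral>\<^sup>+ w. 1 \<partial>N)"
    unfolding prob_never_hits_def by (intro nn_integral_mono) (simp add: indicator_def)
  then show ?thesis
    using N.emeasure_space_1 by simp
qed

lemma prob_never_hits_le_nn_integral:
  assumes A: "A \<in> sets borel"
  shows "prob_never_hits A y \<le> (\<integral>\<^sup>+ w. prob_never_hits A (X y w n) \<partial>N)"
proof -
  have "prob_never_hits A y \<le> (\<integral>\<^sup>+ w. indicator (never_hits A) (X y w n, \<lambda>i. w (i + n)) \<partial>N)"
    unfolding prob_never_hits_def
    by (intro nn_integral_mono) (auto simp: indicator_def dest: never_hits_shift)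
  also have "\<dots> = (\<integral>\<^sup>+ w. prob_never_hits A (X y w n) \<partial>N)"
    unfolding prob_never_hits_def
    by (rule nn_integral_path_chain_shift[OF borel_measurable_indicator[OF sets_never_hits[OF A]]])
  finally show ?thesis .
qed

lemma prob_never_hits_le_on_interval:
  assumes A: "A \<in> sets borel" and z: "\<bar>z\<bar> \<le> R"
  shows "prob_never_hits A z \<le> (SUP y. prob_never_hits A y) * ennreal (1 - hit_bound A R)"
proof -
  let ?H = "prob_never_hits A" and ?x = "\<lambda>w. X z w (Suc 0)"
  define g :: "real \<times> (nat \<Rightarrow> real) \<Rightarrow> ennreal"
    where "g p = indicator (- A) (fst p) * indicator (never_hits A) p" for p
  have meas_g: "g \<in> borel_measurable (borel \<Otimes>\<^sub>M N)"
    unfolding g_def using A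
    by (intro borel_measurable_times_ennreal measurable_compose[OF measurable_fst]
        borel_measurable_indicator sets_never_hits borel_comp)
  have sets_hit: "{w. ?x w \<in> A} \<in> sets N"
    using measurable_sets[OF measurable_path_chain_noise A, of z "Suc 0"] by (simp add: vimage_def)
  have "indicator (never_hits A) (z, w) \<le> g (?x w, \<lambda>i. w (i + Suc 0))" for w
  proof (cases "(z, w) \<in> never_hits A")
    case True
    then have "?x w \<notin> A"
      unfolding mem_never_hits by blast
    moreover have "(?x w, \<lambda>i. w (i + Suc 0)) \<in> never_hits A"
      by (rule never_hits_shift[OF True])
    ultimately show ?thesis
      by (simp add: g_def indicator_def del: path_chain.simps)
  qed simp
  then have "?H z \<le> (\<integral>\<^sup>+ w. g (?x w, \<lambda>i. w (i + Suc 0)) \<partial>N)"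
    unfolding prob_never_hits_def by (rule nn_integral_mono)
  also have "\<dots> = (\<integral>\<^sup>+ w. \<integral>\<^sup>+ w'. g (?x w, w') \<partial>N \<partial>N)"
    by (rule nn_integral_path_chain_shift[OF meas_g])
  also have "\<dots> = (\<integral>\<^sup>+ w. indicator (- A) (?x w) * ?H (?x w) \<partial>N)"
    unfolding g_def prob_never_hits_def fst_conv
    by (intro nn_integral_cong nn_integral_cmult measurable_Pair2[OF borel_measurable_indicator[OF sets_never_hits[OF A]]]) simp
  also have "\<dots> \<le> (\<integral>\<^sup>+ w. (SUP y. ?H y) * indicator (space N - {w. ?x w \<in> A}) w \<partial>N)"
    by (intro nn_integral_mono) (auto simp: indicator_def intro: SUP_upper)
  also have "\<dots> = (SUP y. ?H y) * emeasure N (space N - {w. ?x w \<in> A})"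
    by (rule nn_integral_cmult_indicator[OF sets.Diff[OF sets.top sets_hit]])
  also have "emeasure N (space N - {w. ?x w \<in> A}) = ennreal (1 - measure N {w. ?x w \<in> A})"
    by (simp only: N.emeasure_eq_measure N.prob_compl[OF sets_hit])
  also have "\<dots> \<le> ennreal (1 - hit_bound A R)"
    using hit_bound_le_prob[OF A z] by (intro ennreal_leI) simp
  finally show ?thesis
    by (simp add: mult_left_mono)
qed

lemma hit_bound_nonneg: "0 \<le> hit_bound A R"
  unfolding hit_bound_def using less_imp_le[OF min_normal_minorant_pos] s_pos by simp

lemma hit_bound_le_1:
  assumes "A \<in> sets borel" and "0 \<le> R"
  shows "hit_bound A R \<le> 1"
  using hit_bound_le_prob[OF assms(1), of 0 R] assms(2) N.prob_le_1 by (auto intro: order_trans)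

text \<open>The probability \<open>H\<close> of never returning to \<open>A\<close> is at most \<open>(1 - e) sup H\<close> on
  \<open>[-return_radius, return_radius]\<close>, and the chain is in that interval at some time with
  probability at least \<open>1/2\<close>.\<close>

lemma prob_never_hits_contraction:
  assumes A: "A \<in> sets borel"
  shows "prob_never_hits A x \<le> (SUP y. prob_never_hits A y) * ennreal (1 - hit_bound A return_radius / 2)"
proof -
  let ?H = "prob_never_hits A" and ?R = return_radius
  define M where "M = (SUP y. ?H y)"
  define e where "e = hit_bound A ?R"
  have e: "0 \<le> e" "e \<le> 1"
    unfolding e_def using hit_bound_nonneg hit_bound_le_1[OF A] return_radius_pos by auto
  obtain n where escape: "emeasure N {w. ?R < \<bar>X x w n\<bar>} \<le> ennreal (1/2)"
    using exists_time_escape_prob_le_half by blast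
  define Out where "Out = {w. ?R < \<bar>X x w n\<bar>}"
  have sets_Out: "Out \<in> sets N"
    using measurable_sets[OF borel_measurable_abs[OF measurable_path_chain_noise], of "{?R<..}" x n]
    by (simp add: Out_def vimage_def)
  have "?H (X x w n) \<le> M * ennreal (1 - e) + M * ennreal e * indicator Out w" for w
  proof (cases "w \<in> Out")
    case True
    have "M = M * (ennreal (1 - e) + ennreal e)"
      using e by (simp add: ennreal_plus[symmetric] del: ennreal_plus)
    moreover have "?H (X x w n) \<le> M"
      unfolding M_def by (rule SUP_upper) simp
    ultimately show ?thesis
      using True by (simp add: distrib_left)
  next
    case False
    then have "?H (X x w n) \<le> M * ennreal (1 - e)"
      unfolding M_def e_def Out_def by (intro prob_never_hits_le_on_interval[OF A]) simp
    then show ?thesis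
      by (simp add: add_increasing2)
  qed
  then have "?H x \<le> (\<integral>\<^sup>+ w. M * ennreal (1 - e) + M * ennreal e * indicator Out w \<partial>N)"
    by (intro order_trans[OF prob_never_hits_le_nn_integral[OF A, of x n]] nn_integral_mono)
  also have "\<dots> = M * ennreal (1 - e) + M * ennreal e * emeasure N Out"
    by (rule N.nn_integral_const_add_indicator[OF sets_Out])
  also have "\<dots> \<le> M * ennreal (1 - e) + M * ennreal e * ennreal (1/2)"
    using escape unfolding Out_def by (intro add_left_mono mult_left_mono) auto
  also have "\<dots> = M * ennreal (1 - e/2)"
  proof -
    have "ennreal e * ennreal (1/2) = ennreal (e/2)"
      using e by (subst ennreal_mult[symmetric]) auto
    moreover have "ennreal (1 - e) + ennreal (e/2) = ennreal (1 - e/2)"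
      using e by (subst ennreal_plus[symmetric]) auto
    ultimately show ?thesis
      by (simp add: distrib_left[symmetric] mult.assoc)
  qed
  finally show ?thesis
    unfolding M_def e_def .
qed

lemma prob_never_hits_eq_0:
  assumes A: "A \<in> sets borel" and pos: "0 < emeasure lborel (A \<inter> {0..1})"
  shows "prob_never_hits A y = 0"
proof -
  let ?H = "prob_never_hits A"
  have "(SUP y. ?H y) = 0"
  proof (rule ennreal_eq_0_if_le_mult)
    show "(SUP y. ?H y) \<le> (SUP y. ?H y) * ennreal (1 - hit_bound A return_radius / 2)"
      by (rule SUP_least) (rule prob_never_hits_contraction[OF A])
    show "1 - hit_bound A return_radius / 2 < 1"
      using hit_bound_pos[OF A pos] by simp
    show "(SUP y. ?H y) \<noteq> \<top>"
      using prob_never_hits_le_1 by (metis SUP_least ennreal_one_neq_top top_unique)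
  qed
  then show ?thesis
    by (metis SUP_upper UNIV_I le_zero_eq)
qed

lemma AE_infinitely_often_hits:
  assumes A: "A \<in> sets borel" and pos: "0 < emeasure lborel (A \<inter> {0..1})"
  shows "AE w in N. \<exists>\<^sub>\<infinity>t. X x w t \<in> A"
proof -
  define E where "E m = (\<lambda>w. (X x w m, \<lambda>i. w (i + m))) -` never_hits A \<inter> space N" for m
  have sets_E: "E m \<in> sets N" for m
    unfolding E_def
    by (rule measurable_sets[OF measurable_Pair[OF measurable_path_chain_noise measurable_noise_shift]
          sets_never_hits[OF A]])
  have "emeasure N (E m) = 0" for m
  proof -
    have "emeasure N (E m) = (\<integral>\<^sup>+ w. indicator (never_hits A) (X x w m, \<lambda>i. w (i + m)) \<partial>N)"
      using sets_E by (simp add: nn_integral_indicator[symmetric] E_def indicator_def del: nn_integral_indicator)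
    also have "\<dots> = (\<integral>\<^sup>+ w. prob_never_hits A (X x w m) \<partial>N)"
      unfolding prob_never_hits_def
      by (rule nn_integral_path_chain_shift[OF borel_measurable_indicator[OF sets_never_hits[OF A]]])
    also have "\<dots> = 0"
      by (simp add: prob_never_hits_eq_0[OF A pos])
    finally show ?thesis .
  qed
  then have "(\<Union>m. E m) \<in> null_sets N"
    using sets_E by (intro null_sets_UN null_setsI) auto
  moreover have "{w \<in> space N. \<not> (\<exists>\<^sub>\<infinity>t. X x w t \<in> A)} \<subseteq> (\<Union>m. E m)"
  proof
    fix w
    assume "w \<in> {w \<in> space N. \<not> (\<exists>\<^sub>\<infinity>t. X x w t \<in> A)}"
    then obtain m where "\<forall>t>m. X x w t \<notin> A"
      unfolding INFM_nat by blast
    then have "(X x w m, \<lambda>i. w (i + m)) \<in> never_hits A"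
      unfolding mem_never_hits by (metis path_chain_add add_Suc less_add_Suc2)
    then show "w \<in> (\<Union>m. E m)"
      by (auto simp: E_def)
  qed
  ultimately show ?thesis
    by (rule AE_I')
qed

section \<open>The stationary law\<close>

text \<open>The stationary path value is the path started in the infinite past: \<open>w k\<close> plays the role of
  the selected step taken \<open>k + 1\<close> iterations ago.\<close>

definition stationary_path :: "(nat \<Rightarrow> real) \<Rightarrow> real" where
  "stationary_path w = (\<Sum>k. s * r^k * w k)"

definition stationary_law :: "real measure" where
  "stationary_law = distr N borel stationary_path"

definition geom_square_summable :: "(nat \<Rightarrow> real) \<Rightarrow> bool" where
  "geom_square_summable w \<longleftrightarrow> summable (\<lambda>k. r^k * (w k)\<^sup>2)"

lemma measurable_stationary_path: "stationary_path \<in> borel_measurable N"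
  unfolding stationary_path_def[abs_def]
  by (intro borel_measurable_suminf borel_measurable_times[OF borel_measurable_const measurable_noise_component])

lemma sums_power_r: "(\<lambda>k. r^k) sums (1 / c)"
  using geometric_sums[of r] r_pos r_less_1 by simp

lemma nn_integral_weighted_squares_finite: "(\<integral>\<^sup>+ w. (\<Sum>k. ennreal (r^k * (w k)\<^sup>2)) \<partial>N) < \<infinity>"
proof -
  have meas_square: "(\<lambda>z::real. ennreal (z\<^sup>2)) \<in> borel_measurable borel"
    by measurable
  have meas: "(\<lambda>w. ennreal (r^k) * ennreal ((w k)\<^sup>2)) \<in> borel_measurable N" for k
    by (intro borel_measurable_times_ennreal borel_measurable_const
        measurable_compose[OF measurable_noise_component meas_square])
  have "(\<integral>\<^sup>+ w. (\<Sum>k. ennreal (r^k * (w k)\<^sup>2)) \<partial>N) = (\<integral>\<^sup>+ w. (\<Sum>k. ennreal (r^k) * ennreal ((w k)\<^sup>2)) \<partial>N)"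
    using r_pos by (simp add: ennreal_mult)
  also have "\<dots> = (\<Sum>k. \<integral>\<^sup>+ w. ennreal (r^k) * ennreal ((w k)\<^sup>2) \<partial>N)"
    by (rule nn_integral_suminf[OF meas])
  also have "\<dots> = (\<Sum>k. ennreal (r^k) * (\<integral>\<^sup>+ z. ennreal (z\<^sup>2) \<partial>\<mu>))"
    by (simp only: nn_integral_cmult[OF measurable_compose[OF measurable_noise_component meas_square]]
        nn_integral_noise_component[OF meas_square])
  also have "\<dots> = (\<Sum>k. ennreal (r^k)) * (\<integral>\<^sup>+ z. ennreal (z\<^sup>2) \<partial>\<mu>)"
    by (rule ennreal_suminf_multc)
  also have "\<dots> = ennreal (1 / c) * (\<integral>\<^sup>+ z. ennreal (z\<^sup>2) \<partial>\<mu>)"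
    using r_pos by (subst suminf_ennreal_eq[OF _ sums_power_r]) simp_all
  also have "\<dots> < \<infinity>"
    using nn_integral_min_normal_square_finite[OF lam_pos] by (simp add: ennreal_mult_less_top)
  finally show ?thesis .
qed

lemma AE_geom_square_summable: "AE w in N. geom_square_summable w"
proof -
  have meas: "(\<lambda>w. \<Sum>k. ennreal (r^k * (w k)\<^sup>2)) \<in> borel_measurable N"
    by (intro borel_measurable_suminf_order measurable_compose[OF measurable_noise_component]) measurable
  have "AE w in N. (\<Sum>k. ennreal (r^k * (w k)\<^sup>2)) \<noteq> \<infinity>"
    using nn_integral_weighted_squares_finite by (intro nn_integral_noteq_infinite[OF meas]) simp
  then show ?thesis
    unfolding geom_square_summable_def
    by (rule eventually_mono) (use r_pos in \<open>auto intro: summable_suminf_not_top\<close>)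
qed

lemma summable_stationary_series:
  assumes "geom_square_summable w"
  shows "summable (\<lambda>k. s * r^k * w k)"
proof (rule summable_comparison_test)
  show "\<exists>N. \<forall>n\<ge>N. norm (s * r^n * w n) \<le> s * r^n + s * (r^n * (w n)\<^sup>2)"
  proof (intro exI allI impI)
    fix n :: nat
    have "(s * r^n) * \<bar>w n\<bar> \<le> (s * r^n) * (1 + (w n)\<^sup>2)"
      using s_pos r_pos abs_le_one_plus_square by (intro mult_left_mono) auto
    then show "norm (s * r^n * w n) \<le> s * r^n + s * (r^n * (w n)\<^sup>2)"
      using s_pos r_pos by (simp add: abs_mult algebra_simps)
  qed
  show "summable (\<lambda>n. s * r^n + s * (r^n * (w n)\<^sup>2))"
    using assms unfolding geom_square_summable_def
    by (intro summable_add summable_mult sums_summable[OF sums_power_r])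
qed

lemma stationary_path_case_nat:
  assumes "geom_square_summable w"
  shows "stationary_path (case_nat a w) = r * stationary_path w + s * a"
proof -
  have "(\<lambda>k. s * r^k * w k) sums stationary_path w"
    unfolding stationary_path_def using summable_stationary_series[OF assms] by (rule summable_sums)
  then have "(\<lambda>k. r * (s * r^k * w k)) sums (r * stationary_path w)"
    by (rule sums_mult)
  moreover have "(\<lambda>k. r * (s * r^k * w k)) = (\<lambda>k. s * r^Suc k * case_nat a w (Suc k))"
    by (simp add: mult_ac)
  ultimately have "(\<lambda>k. s * r^Suc k * case_nat a w (Suc k)) sums (r * stationary_path w)"
    by simp
  then have "(\<lambda>k. s * r^k * case_nat a w k) sums (r * stationary_path w + s * a)"
    by (subst (asm) sums_Suc_iff) simp
  then show ?thesis
    unfolding stationary_path_def by (rule sums_unique[symmetric])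
qed

lemma stationary_path_square_le:
  assumes "geom_square_summable w"
  shows "(stationary_path w)\<^sup>2 \<le> s\<^sup>2 / c * (\<Sum>k. r^k * (w k)\<^sup>2)"
proof (rule LIMSEQ_le_const2)
  show "(\<lambda>n. (\<Sum>k<n. s * r^k * w k)\<^sup>2) \<longlonglongrightarrow> (stationary_path w)\<^sup>2"
    unfolding stationary_path_def
    using summable_LIMSEQ[OF summable_stationary_series[OF assms]] by (intro tendsto_power)
  define q where "q = sqrt r"
  have q: "q^k * q^k = r^k" for k
    unfolding q_def using r_pos by (simp add: power_mult_distrib[symmetric])
  show "\<exists>N. \<forall>n\<ge>N. (\<Sum>k<n. s * r^k * w k)\<^sup>2 \<le> s\<^sup>2 / c * (\<Sum>k. r^k * (w k)\<^sup>2)"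
  proof (intro exI allI impI)
    fix n :: nat
    have "(\<Sum>k<n. s * r^k * w k)\<^sup>2 = (\<Sum>k<n. (s * q^k) * (q^k * w k))\<^sup>2"
      by (simp add: q[symmetric] mult_ac)
    also have "\<dots> \<le> (\<Sum>k<n. (s * q^k)\<^sup>2) * (\<Sum>k<n. (q^k * w k)\<^sup>2)"
      by (rule Cauchy_Schwarz_ineq_sum)
    also have "\<dots> = s\<^sup>2 * (\<Sum>k<n. r^k) * (\<Sum>k<n. r^k * (w k)\<^sup>2)"
      by (simp add: power2_eq_square sum_distrib_left q[symmetric] mult_ac)
    also have "\<dots> \<le> s\<^sup>2 * (1 / c) * (\<Sum>k. r^k * (w k)\<^sup>2)"
    proof (intro mult_mono mult_left_mono)
      show "(\<Sum>k<n. r^k) \<le> 1 / c"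
        using sum_le_suminf[OF sums_summable[OF sums_power_r], of "{..<n}"] sums_unique[OF sums_power_r] r_pos
        by simp
      show "(\<Sum>k<n. r^k * (w k)\<^sup>2) \<le> (\<Sum>k. r^k * (w k)\<^sup>2)"
        using assms r_pos unfolding geom_square_summable_def by (intro sum_le_suminf) auto
    qed (use r_pos c_pos assms in \<open>auto simp: geom_square_summable_def intro!: sum_nonneg suminf_nonneg\<close>)
    finally show "(\<Sum>k<n. s * r^k * w k)\<^sup>2 \<le> s\<^sup>2 / c * (\<Sum>k. r^k * (w k)\<^sup>2)"
      by simp
  qed
qed

lemma emeasure_path_kernel:
  assumes B: "B \<in> sets borel"
  shows "emeasure (path_kernel c lam x) B = (\<integral>\<^sup>+ a. indicator B (r * x + s * a) \<partial>\<mu>)"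
proof -
  have "emeasure (path_kernel c lam x) B = (\<integral>\<^sup>+ y. indicator B y \<partial>path_kernel c lam x)"
    using B by (simp add: path_kernel_def)
  also have "\<dots> = (\<integral>\<^sup>+ a. indicator B (r * x + s * a) \<partial>\<mu>)"
    unfolding path_kernel_def using B
    by (intro nn_integral_distr) (simp_all add: measurable_cong_sets[OF sets_min_normal refl] measurable_affine)
  finally show ?thesis .
qed

lemma borel_measurable_emeasure_path_kernel:
  assumes B: "B \<in> sets borel"
  shows "(\<lambda>x. emeasure (path_kernel c lam x) B) \<in> borel_measurable borel"
proof -
  have "(\<lambda>(x, a). indicator B (r * x + s * a) :: ennreal) \<in> borel_measurable (borel \<Otimes>\<^sub>M \<mu>)"
    unfolding measurable_cong_sets[OF sets_pair_measure_cong[OF refl sets_min_normal] refl]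
    using B by measurable
  then show ?thesis
    using sigma_finite_measure.borel_measurable_nn_integral[OF prob_space_imp_sigma_finite[OF prob_space_min_normal]]
    by (simp add: emeasure_path_kernel[OF B])
qed

lemma borel_measurable_stationary_step:
  assumes B: "B \<in> sets borel"
  shows "(\<lambda>(a, w). indicator B (r * stationary_path w + s * a) :: ennreal) \<in> borel_measurable (\<mu> \<Otimes>\<^sub>M N)"
proof -
  have "fst \<in> borel_measurable (\<mu> \<Otimes>\<^sub>M N)"
    using measurable_fst[of \<mu> N] unfolding measurable_cong_sets[OF refl sets_min_normal] .
  moreover have "(\<lambda>p. stationary_path (snd p)) \<in> borel_measurable (\<mu> \<Otimes>\<^sub>M N)"
    by (rule measurable_compose[OF measurable_snd measurable_stationary_path])
  ultimately have "(\<lambda>p. r * stationary_path (snd p) + s * fst p) \<in> borel_measurable (\<mu> \<Otimes>\<^sub>M N)"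
    by (intro borel_measurable_add borel_measurable_times borel_measurable_const)
  then show ?thesis
    unfolding case_prod_beta' by (rule measurable_compose[OF _ borel_measurable_indicator[OF B]])
qed

text \<open>Prepending a fresh step \<open>a\<close> to the noise moves \<open>stationary_path w\<close> one step of the
  kernel forward, to \<open>r * stationary_path w + s * a\<close>, while leaving the law of the noise unchanged.\<close>

lemma invariant_stationary_law: "is_invariant_prob c lam stationary_law"
  unfolding is_invariant_prob_def
proof (intro conjI ballI)
  let ?Y = stationary_path
  show "prob_space stationary_law"
    unfolding stationary_law_def by (rule N.prob_space_distr[OF measurable_stationary_path])
  show "sets stationary_law = sets borel"
    unfolding stationary_law_def by simp
  fix B :: "real set"
  assume B: "B \<in> sets borel"
  interpret pair_sigma_finite \<mu> N
    by (intro pair_sigma_finite.intro prob_space_imp_sigma_finite prob_space_min_normal N.prob_space_axioms)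
  have meas_Y: "(\<lambda>w. indicator B (?Y w) :: ennreal) \<in> borel_measurable N"
    by (rule measurable_compose[OF measurable_stationary_path borel_measurable_indicator[OF B]])
  have "emeasure stationary_law B = (\<integral>\<^sup>+ x. indicator B x \<partial>stationary_law)"
    using B by (intro nn_integral_indicator[symmetric]) (simp add: stationary_law_def)
  also have "\<dots> = (\<integral>\<^sup>+ w. indicator B (?Y w) \<partial>N)"
    unfolding stationary_law_def using B
    by (intro nn_integral_distr[OF measurable_stationary_path])
      (simp add: measurable_cong_sets[OF sets_distr refl])
  also have "\<dots> = (\<integral>\<^sup>+ a. \<integral>\<^sup>+ w. indicator B (?Y (case_nat a w)) \<partial>N \<partial>\<mu>)"
    by (rule nn_integral_noise_case_nat[OF meas_Y])
  also have "\<dots> = (\<integral>\<^sup>+ a. \<integral>\<^sup>+ w. indicator B (r * ?Y w + s * a) \<partial>N \<partial>\<mu>)"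
    using AE_geom_square_summable
    by (intro nn_integral_cong nn_integral_cong_AE) (auto elim!: eventually_mono simp: stationary_path_case_nat)
  also have "\<dots> = (\<integral>\<^sup>+ w. \<integral>\<^sup>+ a. indicator B (r * ?Y w + s * a) \<partial>\<mu> \<partial>N)"
    by (rule Fubini'[OF borel_measurable_stationary_step[OF B], symmetric])
  also have "\<dots> = (\<integral>\<^sup>+ w. emeasure (path_kernel c lam (?Y w)) B \<partial>N)"
    by (simp add: emeasure_path_kernel[OF B])
  also have "\<dots> = (\<integral>\<^sup>+ x. emeasure (path_kernel c lam x) B \<partial>stationary_law)"
    unfolding stationary_law_def
    by (rule nn_integral_distr[OF measurable_stationary_path, symmetric])
      (simp add: measurable_cong_sets[OF sets_distr refl] borel_measurable_emeasure_path_kernel[OF B])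
  finally show "emeasure stationary_law B = (\<integral>\<^sup>+ x. emeasure (path_kernel c lam x) B \<partial>stationary_law)" .
qed

lemma integrable_stationary_law_square: "integrable stationary_law (\<lambda>x. x\<^sup>2)"
proof -
  have meas_square: "(\<lambda>x::real. x\<^sup>2) \<in> borel_measurable borel"
    by measurable
  have "(\<integral>\<^sup>+ w. ennreal (norm ((stationary_path w)\<^sup>2)) \<partial>N)
      \<le> (\<integral>\<^sup>+ w. ennreal (s\<^sup>2 / c) * (\<Sum>k. ennreal (r^k * (w k)\<^sup>2)) \<partial>N)"
  proof (rule nn_integral_mono_AE)
    show "AE w in N. ennreal (norm ((stationary_path w)\<^sup>2)) \<le> ennreal (s\<^sup>2 / c) * (\<Sum>k. ennreal (r^k * (w k)\<^sup>2))"
      using AE_geom_square_summable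
    proof (rule eventually_mono)
      fix w
      assume sq: "geom_square_summable w"
      then have "(\<Sum>k. ennreal (r^k * (w k)\<^sup>2)) = ennreal (\<Sum>k. r^k * (w k)\<^sup>2)"
        using r_pos unfolding geom_square_summable_def by (intro suminf_ennreal2) auto
      moreover have "0 \<le> (\<Sum>k. r^k * (w k)\<^sup>2)"
        using sq r_pos unfolding geom_square_summable_def by (intro suminf_nonneg) auto
      ultimately show "ennreal (norm ((stationary_path w)\<^sup>2)) \<le> ennreal (s\<^sup>2 / c) * (\<Sum>k. ennreal (r^k * (w k)\<^sup>2))"
        using stationary_path_square_le[OF sq] c_pos by (simp add: ennreal_mult[symmetric] ennreal_leI)
    qed
  qed
  also have "\<dots> = ennreal (s\<^sup>2 / c) * (\<integral>\<^sup>+ w. (\<Sum>k. ennreal (r^k * (w k)\<^sup>2)) \<partial>N)"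
    by (intro nn_integral_cmult borel_measurable_suminf_order measurable_compose[OF measurable_noise_component])
      measurable
  also have "\<dots> < \<infinity>"
    using nn_integral_weighted_squares_finite by (simp add: ennreal_mult_less_top)
  finally have "integrable N (\<lambda>w. (stationary_path w)\<^sup>2)"
    by (intro integrableI_bounded measurable_compose[OF measurable_stationary_path meas_square])
  then show ?thesis
    unfolding stationary_law_def by (subst integrable_distr_eq[OF measurable_stationary_path meas_square])
qed

lemma phi_irreducible_uniform: "phi_irreducible c lam (uniform_measure lborel {0..1})"
  unfolding phi_irreducible_def
proof (intro conjI ballI impI allI)
  show "sets (uniform_measure lborel {0..1}) = sets borel"
    by simp
  show "emeasure (uniform_measure lborel {0..1}) (space (uniform_measure lborel {0..1::real})) \<noteq> 0"
    by (simp add: emeasure_uniform_unit_interval)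
  fix A :: "real set" and x :: real
  assume A: "A \<in> sets borel" and "0 < emeasure (uniform_measure lborel {0..1}) A"
  then have pos: "0 < emeasure lborel (A \<inter> {0..1})"
    by (simp only: emeasure_uniform_unit_interval)
  have "0 < measure N {w. X x w (Suc 0) \<in> A}"
    using hit_bound_pos[OF A pos, of "\<bar>x\<bar>"] hit_bound_le_prob[OF A, of x "\<bar>x\<bar>"] by linarith
  then show "\<exists>t\<ge>1. 0 < measure N {w \<in> space N. X x w t \<in> A}"
    by (intro exI[of _ "Suc 0"]) simp
qed

lemma positive_harris_recurrent_path_chain: "positive_harris_recurrent c lam"
  unfolding positive_harris_recurrent_def
proof (intro exI conjI ballI impI allI)
  show "phi_irreducible c lam (uniform_measure lborel {0..1})"
    by (rule phi_irreducible_uniform)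
  show "is_invariant_prob c lam stationary_law"
    by (rule invariant_stationary_law)
  fix A :: "real set" and x :: real
  assume A: "A \<in> sets borel" and "0 < emeasure (uniform_measure lborel {0..1}) A"
  then show "AE w in N. \<exists>\<^sub>\<infinity>t. X x w t \<in> A"
    by (intro AE_infinitely_often_hits) (simp_all only: emeasure_uniform_unit_interval)
qed

end

text \<open>The step-size parameter \<open>d_sigma\<close> does not enter the dynamics of the path.\<close>

theorem lemma13:
  fixes c d_sigma :: real and lam :: nat
  assumes "0 < c" and "c < 1" and "lam \<ge> 1" and "d_sigma > 0"
  shows "positive_harris_recurrent c lam \<and>
         (\<exists>\<mu>_path. is_invariant_prob c lam \<mu>_path \<and> integrable \<mu>_path (\<lambda>x. x ^ 2))"
proof -
  interpret csa_path c lam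
    using assms by unfold_locales auto
  show ?thesis
    using positive_harris_recurrent_path_chain invariant_stationary_law integrable_stationary_law_square by blast
qed

end
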